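(* Let $M$ and $N$ be finitely generated, semipositive binoids. Then for every $q\in\mathbb N_+$ $$\operatorname{HKF}(M\wedge N,q)=\operatorname{HKF}(M,q)\cdot\operatorname{HKF}(N,q).$$
   Context: A binoid $(N,+,0,\infty)$ is a commutative monoid $(N,+,0)$ with an element $\infty$ satisfying $a+\infty=\infty$ for all $a\in N$. Write $N^\bullet=N\setminus\{\infty\}$, $N^\times$ for the group of units of $N$ and $N_+=N\setminus N^\times$. $N$ is finitely generated if it is finitely generated as a monoid; semipositive if $N\neq\{\infty\}$ and $N^\times$ is finite. The smash product $M\wedge N$ is the binoid $(M^\bullet\times N^\bullet)\cup\{\infty\}$ with $(a,b)+(c,d)=(a+c,b+d)$ if $a+c\neq\infty$ and $b+d\neq\infty$, and $=\infty$ otherwise. An ideal of $N$ is a nonempty subset $I\subseteq N$ with $I+N\subseteq I$. For an ideal $I$ and $q\in\mathbb N_+$, $[q]I$ denotes the ideal generated by $\{qa: a\in I\}$; $N/I=(N\setminus I)\cup\{\infty\}$. $\operatorname{HKF}(N,q)=\#N/[q]N_+$, with $\#S=|S|-1$ for a finite pointed set $S$. *)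

theory Defs
  imports Main
begin

record 'a binoid =
  bcarrier :: "'a set"
  badd :: "'a \<Rightarrow> 'a \<Rightarrow> 'a"
  bzero :: 'a
  binf :: 'a

definition is_binoid :: "'a binoid \<Rightarrow> bool" where
  "is_binoid N \<longleftrightarrow>
     (\<forall>a\<in>bcarrier N. \<forall>b\<in>bcarrier N. badd N a b \<in> bcarrier N) \<and>
     (\<forall>a\<in>bcarrier N. \<forall>b\<in>bcarrier N. \<forall>c\<in>bcarrier N.
        badd N (badd N a b) c = badd N a (badd N b c)) \<and>
     (\<forall>a\<in>bcarrier N. \<forall>b\<in>bcarrier N. badd N a b = badd N b a) \<and>
     bzero N \<in> bcarrier N \<and>
     (\<forall>a\<in>bcarrier N. badd N (bzero N) a = a) \<and>
     binf N \<in> bcarrier N \<and>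
     (\<forall>a\<in>bcarrier N. badd N a (binf N) = binf N)"

definition bdot :: "'a binoid \<Rightarrow> 'a set" where
  "bdot N = bcarrier N - {binf N}"

definition bunits :: "'a binoid \<Rightarrow> 'a set" where
  "bunits N = {a \<in> bcarrier N. \<exists>b\<in>bcarrier N. badd N a b = bzero N}"

definition bplus :: "'a binoid \<Rightarrow> 'a set" where
  "bplus N = bcarrier N - bunits N"

inductive_set bgen :: "'a binoid \<Rightarrow> 'a set \<Rightarrow> 'a set" for N G where
  zero: "bzero N \<in> bgen N G"
| gen: "g \<in> G \<Longrightarrow> g \<in> bgen N G"
| add: "a \<in> bgen N G \<Longrightarrow> b \<in> bgen N G \<Longrightarrow> badd N a b \<in> bgen N G"

definition fin_gen :: "'a binoid \<Rightarrow> bool" where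
  "fin_gen N \<longleftrightarrow> (\<exists>G. finite G \<and> G \<subseteq> bcarrier N \<and> bgen N G = bcarrier N)"

definition semipositive :: "'a binoid \<Rightarrow> bool" where
  "semipositive N \<longleftrightarrow> bcarrier N \<noteq> {binf N} \<and> finite (bunits N)"

primrec bmult :: "'a binoid \<Rightarrow> nat \<Rightarrow> 'a \<Rightarrow> 'a" where
  "bmult N 0 a = bzero N"
| "bmult N (Suc n) a = badd N a (bmult N n a)"

definition bideal_gen :: "'a binoid \<Rightarrow> 'a set \<Rightarrow> 'a set" where
  "bideal_gen N S = {badd N s n | s n. s \<in> S \<and> n \<in> bcarrier N}"

definition bfrob_ideal :: "'a binoid \<Rightarrow> nat \<Rightarrow> 'a set \<Rightarrow> 'a set" where
  "bfrob_ideal N q I = bideal_gen N ((bmult N q) ` I)"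

text \<open>Underlying pointed set of N/I = (N \ I) \<union> {\<infinity>}\<close>
definition bquot_set :: "'a binoid \<Rightarrow> 'a set \<Rightarrow> 'a set" where
  "bquot_set N I = (bcarrier N - I) \<union> {binf N}"

definition pcard :: "'a set \<Rightarrow> nat" where
  "pcard S = card S - 1"

definition HKF :: "'a binoid \<Rightarrow> nat \<Rightarrow> nat" where
  "HKF N q = pcard (bquot_set N (bfrob_ideal N q (bplus N)))"

text \<open>Smash product: carrier (M^\<bullet> \<times> N^\<bullet>) \<union> {\<infinity>}, with \<infinity> represented by None.\<close>
definition smash :: "'a binoid \<Rightarrow> 'b binoid \<Rightarrow> ('a \<times> 'b) option binoid" where
  "smash M N =
     \<lparr> bcarrier = Some ` (bdot M \<times> bdot N) \<union> {None},
       badd = (\<lambda>x y. case (x, y) of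
                 (Some (a, b), Some (c, d)) \<Rightarrow>
                    (if badd M a c \<noteq> binf M \<and> badd N b d \<noteq> binf N
                     then Some (badd M a c, badd N b d) else None)
               | _ \<Rightarrow> None),
       bzero = (if bzero M \<noteq> binf M \<and> bzero N \<noteq> binf N
                then Some (bzero M, bzero N) else None),
       binf = None \<rparr>"

end

theory Submission
  imports Defs
begin

text \<open>In \<open>M \<and> N\<close> every element other than \<open>\<infinity>\<close> is a pair \<open>(a, b)\<close> of nonabsorbing elements,
and \<open>(a, b)\<close> is a unit exactly when both \<open>a\<close> and \<open>b\<close> are. Hence \<open>(M \<and> N)\<^sub>+\<close> consists of the pairs with
\<open>a \<in> M\<^sub>+\<close> or \<open>b \<in> N\<^sub>+\<close>, and a pair \<open>(x, y)\<close> lies in \<open>[q](M \<and> N)\<^sub>+\<close> iff \<open>x \<in> [q]M\<^sub>+\<close> or \<open>y \<in> [q]N\<^sub>+\<close>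
(for the converse pad with the neutral element: \<open>q(a, 0) + (c, y) = (x, y)\<close>). So the complement
of \<open>[q](M \<and> N)\<^sub>+\<close> in \<open>(M \<and> N)\<^sup>\<bullet>\<close> is the product of the complements of \<open>[q]M\<^sub>+\<close> and \<open>[q]N\<^sub>+\<close>,
and counting points other than \<open>\<infinity>\<close> gives the product formula.\<close>

lemma binoid_add_closed:
  "is_binoid N \<Longrightarrow> a \<in> bcarrier N \<Longrightarrow> b \<in> bcarrier N \<Longrightarrow> badd N a b \<in> bcarrier N"
  unfolding is_binoid_def by blast

lemma binoid_zero_closed: "is_binoid N \<Longrightarrow> bzero N \<in> bcarrier N"
  unfolding is_binoid_def by blast

lemma binoid_inf_closed: "is_binoid N \<Longrightarrow> binf N \<in> bcarrier N"
  unfolding is_binoid_def by blast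

lemma binoid_zero_add: "is_binoid N \<Longrightarrow> a \<in> bcarrier N \<Longrightarrow> badd N (bzero N) a = a"
  unfolding is_binoid_def by blast

lemma binoid_add_inf: "is_binoid N \<Longrightarrow> a \<in> bcarrier N \<Longrightarrow> badd N a (binf N) = binf N"
  unfolding is_binoid_def by blast

lemma binoid_inf_add: "is_binoid N \<Longrightarrow> a \<in> bcarrier N \<Longrightarrow> badd N (binf N) a = binf N"
  unfolding is_binoid_def by metis

lemma binoid_zero_ne_inf:
  assumes N: "is_binoid N" and nontrivial: "bcarrier N \<noteq> {binf N}"
  shows "bzero N \<noteq> binf N"
proof
  assume "bzero N = binf N"
  then have "a = binf N" if "a \<in> bcarrier N" for a
    using binoid_zero_add[OF N that] binoid_inf_add[OF N that] by simp
  then show False using nontrivial binoid_inf_closed[OF N] by blast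
qed

lemma bmult_closed: "is_binoid N \<Longrightarrow> a \<in> bcarrier N \<Longrightarrow> bmult N n a \<in> bcarrier N"
  by (induction n) (simp_all add: binoid_zero_closed binoid_add_closed)

lemma bmult_zero: "is_binoid N \<Longrightarrow> bmult N n (bzero N) = bzero N"
  by (induction n) (simp_all add: binoid_zero_closed binoid_zero_add)

lemma bmult_inf: "is_binoid N \<Longrightarrow> n \<ge> 1 \<Longrightarrow> bmult N n (binf N) = binf N"
  by (cases n) (simp_all add: binoid_inf_add bmult_closed binoid_inf_closed)

lemma bfrob_idealI:
  "a \<in> S \<Longrightarrow> c \<in> bcarrier N \<Longrightarrow> x = badd N (bmult N q a) c \<Longrightarrow> x \<in> bfrob_ideal N q S"
  unfolding bfrob_ideal_def bideal_gen_def by blast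

lemma bfrob_idealE:
  assumes "x \<in> bfrob_ideal N q S"
  obtains a c where "a \<in> S" "c \<in> bcarrier N" "x = badd N (bmult N q a) c"
  using assms unfolding bfrob_ideal_def bideal_gen_def by blast

lemma bfrob_summands_ne_inf:
  assumes N: "is_binoid N" and q: "q \<ge> 1" and a: "a \<in> bcarrier N" and c: "c \<in> bcarrier N"
    and x: "badd N (bmult N q a) c \<noteq> binf N"
  shows "a \<noteq> binf N" and "c \<noteq> binf N" and "bmult N q a \<noteq> binf N"
  using x bmult_inf[OF N q] binoid_inf_add[OF N c] binoid_add_inf[OF N bmult_closed[OF N a]]
  by auto

lemma binf_in_bfrob_ideal_bplus:
  assumes N: "is_binoid N" and z: "bzero N \<noteq> binf N" and q: "q \<ge> 1"
  shows "binf N \<in> bfrob_ideal N q (bplus N)"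
proof (rule bfrob_idealI)
  show "binf N \<in> bplus N"
    using z binoid_inf_closed[OF N] binoid_inf_add[OF N] by (auto simp: bplus_def bunits_def)
  show "binf N = badd N (bmult N q (binf N)) (bzero N)"
    by (simp add: bmult_inf[OF N q] binoid_inf_add[OF N] binoid_zero_closed[OF N])
qed (rule binoid_zero_closed[OF N])

lemma pcard_bquot_set:
  assumes "binf N \<in> I"
  shows "pcard (bquot_set N I) = card (bcarrier N - I)"
proof -
  have "bquot_set N I = insert (binf N) (bcarrier N - I)"
    unfolding bquot_set_def by auto
  then show ?thesis
    using assms by (cases "finite (bcarrier N - I)") (simp_all add: pcard_def)
qed

lemma smash_carrier: "bcarrier (smash M N) = Some ` (bdot M \<times> bdot N) \<union> {None}"
  by (simp add: smash_def)

lemma smash_inf: "binf (smash M N) = None"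
  by (simp add: smash_def)

lemma smash_add_None_left [simp]: "badd (smash M N) None y = None"
  by (simp add: smash_def)

lemma smash_add_None_right [simp]: "badd (smash M N) x None = None"
  by (cases x) (auto simp: smash_def)

lemma smash_add_Some:
  "badd (smash M N) (Some (a, b)) (Some (c, d)) =
     (if badd M a c \<noteq> binf M \<and> badd N b d \<noteq> binf N
      then Some (badd M a c, badd N b d) else None)"
  by (simp add: smash_def)

lemma bmult_smash_None: "n \<ge> 1 \<Longrightarrow> bmult (smash M N) n None = None"
  by (cases n) simp_all

text \<open>The assumption \<open>0 \<noteq> \<infinity>\<close> on both factors makes \<open>(0, 0)\<close> the neutral element of the smash
product; otherwise \<open>M \<and> N\<close> is the zero binoid.\<close>

locale smash_factors =
  fixes M :: "'a binoid" and N :: "'b binoid"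
  assumes M: "is_binoid M" and N: "is_binoid N"
    and zero_ne_inf_M: "bzero M \<noteq> binf M" and zero_ne_inf_N: "bzero N \<noteq> binf N"
begin

lemma zero_in_bdot: "bzero M \<in> bdot M" "bzero N \<in> bdot N"
  using zero_ne_inf_M zero_ne_inf_N binoid_zero_closed[OF M] binoid_zero_closed[OF N]
  by (simp_all add: bdot_def)

lemma smash_zero: "bzero (smash M N) = Some (bzero M, bzero N)"
  using zero_ne_inf_M zero_ne_inf_N by (simp add: smash_def)

lemma bmult_smash_Some:
  assumes a: "a \<in> bcarrier M" and b: "b \<in> bcarrier N"
  shows "bmult (smash M N) n (Some (a, b)) =
    (if bmult M n a \<noteq> binf M \<and> bmult N n b \<noteq> binf N
     then Some (bmult M n a, bmult N n b) else None)"
proof (induction n)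
  case 0
  show ?case using zero_ne_inf_M zero_ne_inf_N by (simp add: smash_zero)
next
  case (Suc n)
  show ?case
  proof (cases "bmult M n a \<noteq> binf M \<and> bmult N n b \<noteq> binf N")
    case True
    then show ?thesis using Suc by (simp add: smash_add_Some)
  next
    case False
    then have "bmult M (Suc n) a = binf M \<or> bmult N (Suc n) b = binf N"
      using a b by (auto simp: binoid_add_inf[OF M] binoid_add_inf[OF N])
    then show ?thesis using Suc False by simp
  qed
qed

lemma None_notin_bunits_smash: "None \<notin> bunits (smash M N)"
  by (auto simp: bunits_def smash_zero)

lemma Some_in_bunits_smash_iff:
  assumes a: "a \<in> bdot M" and b: "b \<in> bdot N"
  shows "Some (a, b) \<in> bunits (smash M N) \<longleftrightarrow> a \<in> bunits M \<and> b \<in> bunits N"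
proof
  assume "Some (a, b) \<in> bunits (smash M N)"
  then obtain y where y: "y \<in> bcarrier (smash M N)"
    and sum: "badd (smash M N) (Some (a, b)) y = Some (bzero M, bzero N)"
    by (auto simp: bunits_def smash_zero)
  then obtain c d where "y = Some (c, d)" "c \<in> bdot M" "d \<in> bdot N"
    by (auto simp: smash_carrier)
  then show "a \<in> bunits M \<and> b \<in> bunits N"
    using sum a b by (auto simp: bunits_def bdot_def smash_add_Some split: if_splits)
next
  assume "a \<in> bunits M \<and> b \<in> bunits N"
  then obtain c d where c: "c \<in> bcarrier M" "badd M a c = bzero M"
    and d: "d \<in> bcarrier N" "badd N b d = bzero N"
    by (auto simp: bunits_def)
  have "c \<noteq> binf M" using c a zero_ne_inf_M binoid_add_inf[OF M] by (auto simp: bdot_def)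
  moreover have "d \<noteq> binf N" using d b zero_ne_inf_N binoid_add_inf[OF N] by (auto simp: bdot_def)
  ultimately have "Some (c, d) \<in> bcarrier (smash M N)"
    and "badd (smash M N) (Some (a, b)) (Some (c, d)) = bzero (smash M N)"
    using c d zero_ne_inf_M zero_ne_inf_N by (auto simp: smash_carrier bdot_def smash_add_Some smash_zero)
  then show "Some (a, b) \<in> bunits (smash M N)"
    using a b by (auto simp: bunits_def smash_carrier)
qed

lemma None_in_bfrob_ideal_smash:
  assumes q: "q \<ge> 1"
  shows "None \<in> bfrob_ideal (smash M N) q (bplus (smash M N))"
proof (rule bfrob_idealI[where c = None])
  show "None \<in> bplus (smash M N)"
    using None_notin_bunits_smash by (simp add: bplus_def smash_carrier)
qed (simp_all add: smash_carrier bmult_smash_None[OF q])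

lemma Some_in_bfrob_ideal_smash_iff:
  assumes q: "q \<ge> 1" and x: "x \<in> bdot M" and y: "y \<in> bdot N"
  shows "Some (x, y) \<in> bfrob_ideal (smash M N) q (bplus (smash M N)) \<longleftrightarrow>
    (\<exists>a\<in>bdot M. \<exists>b\<in>bdot N. \<exists>c\<in>bdot M. \<exists>d\<in>bdot N. (a \<notin> bunits M \<or> b \<notin> bunits N) \<and>
       x = badd M (bmult M q a) c \<and> y = badd N (bmult N q b) d)"
    (is "?lhs \<longleftrightarrow> ?rhs")
proof
  assume ?lhs
  then obtain s n where s: "s \<in> bplus (smash M N)" and n: "n \<in> bcarrier (smash M N)"
    and sum: "Some (x, y) = badd (smash M N) (bmult (smash M N) q s) n"
    by (rule bfrob_idealE)
  have "s \<noteq> None"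
    using sum by (cases s) (simp_all add: bmult_smash_None[OF q])
  then obtain a b where ab: "s = Some (a, b)" "a \<in> bdot M" "b \<in> bdot N"
    using s by (auto simp: bplus_def smash_carrier)
  obtain c d where cd: "n = Some (c, d)" "c \<in> bdot M" "d \<in> bdot N"
    using n sum by (auto simp: smash_carrier)
  have "a \<notin> bunits M \<or> b \<notin> bunits N"
    using s Some_in_bunits_smash_iff ab by (auto simp: bplus_def)
  moreover have "x = badd M (bmult M q a) c \<and> y = badd N (bmult N q b) d"
    using sum ab cd bmult_smash_Some[of a b q]
    by (auto simp: bdot_def smash_add_Some split: if_splits)
  ultimately show ?rhs using ab cd by blast
next
  assume ?rhs
  then obtain a b c d where ab: "a \<in> bdot M" "b \<in> bdot N" and cd: "c \<in> bdot M" "d \<in> bdot N"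
    and nonunit: "a \<notin> bunits M \<or> b \<notin> bunits N"
    and sums: "x = badd M (bmult M q a) c" "y = badd N (bmult N q b) d"
    by blast
  have carr: "a \<in> bcarrier M" "b \<in> bcarrier N" "c \<in> bcarrier M" "d \<in> bcarrier N"
    using ab cd by (simp_all add: bdot_def)
  have "bmult M q a \<noteq> binf M" "bmult N q b \<noteq> binf N"
    using bfrob_summands_ne_inf(3)[OF M q carr(1,3)] bfrob_summands_ne_inf(3)[OF N q carr(2,4)]
      x y sums by (auto simp: bdot_def)
  then have "Some (x, y) = badd (smash M N) (bmult (smash M N) q (Some (a, b))) (Some (c, d))"
    using x y sums by (simp add: bmult_smash_Some[OF carr(1,2)] smash_add_Some bdot_def)
  moreover have "Some (a, b) \<in> bplus (smash M N)"
    using nonunit Some_in_bunits_smash_iff[OF ab] ab by (simp add: bplus_def smash_carrier)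
  ultimately show ?lhs
    using cd by (intro bfrob_idealI[where c = "Some (c, d)"]) (auto simp: smash_carrier)
qed

lemma Some_in_bfrob_ideal_smash_iff_components:
  assumes q: "q \<ge> 1" and x: "x \<in> bdot M" and y: "y \<in> bdot N"
  shows "Some (x, y) \<in> bfrob_ideal (smash M N) q (bplus (smash M N)) \<longleftrightarrow>
    x \<in> bfrob_ideal M q (bplus M) \<or> y \<in> bfrob_ideal N q (bplus N)"
proof
  assume "Some (x, y) \<in> bfrob_ideal (smash M N) q (bplus (smash M N))"
  then obtain a b c d where "a \<in> bdot M" "b \<in> bdot N" "c \<in> bdot M" "d \<in> bdot N"
    "a \<notin> bunits M \<or> b \<notin> bunits N"
    "x = badd M (bmult M q a) c" "y = badd N (bmult N q b) d"
    using Some_in_bfrob_ideal_smash_iff[OF q x y] by blast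
  then show "x \<in> bfrob_ideal M q (bplus M) \<or> y \<in> bfrob_ideal N q (bplus N)"
    by (auto intro: bfrob_idealI simp: bplus_def bdot_def)
next
  have y_pad: "y = badd N (bmult N q (bzero N)) y" and x_pad: "x = badd M (bmult M q (bzero M)) x"
    using x y by (simp_all add: bmult_zero[OF M] bmult_zero[OF N] binoid_zero_add[OF M]
        binoid_zero_add[OF N] bdot_def)
  assume "x \<in> bfrob_ideal M q (bplus M) \<or> y \<in> bfrob_ideal N q (bplus N)"
  then show "Some (x, y) \<in> bfrob_ideal (smash M N) q (bplus (smash M N))"
  proof
    assume "x \<in> bfrob_ideal M q (bplus M)"
    then obtain a c where a: "a \<in> bplus M" and c: "c \<in> bcarrier M"
      and sum: "x = badd M (bmult M q a) c"
      by (rule bfrob_idealE)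
    have "a \<in> bdot M" "c \<in> bdot M"
      using bfrob_summands_ne_inf[OF M q _ c] a c x sum by (auto simp: bplus_def bdot_def)
    then show ?thesis
      using a sum y_pad y zero_in_bdot
      by (subst Some_in_bfrob_ideal_smash_iff[OF q x y]) (auto simp: bplus_def)
  next
    assume "y \<in> bfrob_ideal N q (bplus N)"
    then obtain b d where b: "b \<in> bplus N" and d: "d \<in> bcarrier N"
      and sum: "y = badd N (bmult N q b) d"
      by (rule bfrob_idealE)
    have "b \<in> bdot N" "d \<in> bdot N"
      using bfrob_summands_ne_inf[OF N q _ d] b d y sum by (auto simp: bplus_def bdot_def)
    then show ?thesis
      using b sum x_pad x zero_in_bdot
      by (subst Some_in_bfrob_ideal_smash_iff[OF q x y]) (auto simp: bplus_def)
  qed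
qed

lemma smash_carrier_minus_bfrob_ideal:
  assumes q: "q \<ge> 1"
  shows "bcarrier (smash M N) - bfrob_ideal (smash M N) q (bplus (smash M N)) =
    Some ` ((bcarrier M - bfrob_ideal M q (bplus M)) \<times> (bcarrier N - bfrob_ideal N q (bplus N)))"
  using None_in_bfrob_ideal_smash[OF q] Some_in_bfrob_ideal_smash_iff_components[OF q]
    binf_in_bfrob_ideal_bplus[OF M zero_ne_inf_M q] binf_in_bfrob_ideal_bplus[OF N zero_ne_inf_N q]
  by (auto simp: smash_carrier bdot_def)

end

text \<open>Semipositivity
is only used for \<open>0 \<noteq> \<infinity>\<close>.\<close>

theorem mainTheorem11:
  fixes M :: "'a binoid" and N :: "'b binoid" and q :: nat
  assumes "is_binoid M" "is_binoid N"
    and "fin_gen M" "fin_gen N"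
    and "semipositive M" "semipositive N"
    and "q \<ge> 1"
  shows "HKF (smash M N) q = HKF M q * HKF N q"
proof -
  have "bzero M \<noteq> binf M" "bzero N \<noteq> binf N"
    using assms by (simp_all add: binoid_zero_ne_inf semipositive_def)
  then interpret smash_factors M N
    using assms by unfold_locales
  have "HKF (smash M N) q =
      card ((bcarrier M - bfrob_ideal M q (bplus M)) \<times> (bcarrier N - bfrob_ideal N q (bplus N)))"
    unfolding HKF_def
    using None_in_bfrob_ideal_smash[OF \<open>q \<ge> 1\<close>]
    by (simp add: pcard_bquot_set smash_inf smash_carrier_minus_bfrob_ideal[OF \<open>q \<ge> 1\<close>]
        card_image)
  also have "\<dots> = HKF M q * HKF N q"
    unfolding HKF_def card_cartesian_product
    using binf_in_bfrob_ideal_bplus[OF M zero_ne_inf_M \<open>q \<ge> 1\<close>]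
      binf_in_bfrob_ideal_bplus[OF N zero_ne_inf_N \<open>q \<ge> 1\<close>]
    by (simp add: pcard_bquot_set)
  finally show ?thesis .
qed

end
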